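(* Let $\widehat{\mathcal H}=\mathcal H^{even}\oplus\mathcal H^{odd}$ be a $\mathbb Z_2$-graded Hilbert space with grading operator $\epsilon=\begin{pmatrix}1&0\\0&-1\end{pmatrix}$, and let $\omega$ be a unitary element of the $C^*$-algebra $C^*(\mathbf 1,\epsilon)\subseteq\mathcal B(\widehat{\mathcal H})$ generated by the identity and $\epsilon$. For $x\in\mathcal B(\widehat{\mathcal H})$ put $x^{\omega}:=\omega\,\overline{x}\,\omega$, where $\overline x$ denotes the ordinary Hilbert space adjoint of $x$; call $x$ $\omega$-hermitian if $x^\omega=x$. Then $x$ is $\omega$-hermitian with $\Vert x\Vert\le 1$ if and only if $$\Vert x-it\,\omega\Vert\le\sqrt{1+t^2}\quad\text{for every } t\in\mathbb R.$$
   Context: $C^*(\mathbf 1,\epsilon)\cong\mathbb C\oplus\mathbb C$, so a unitary $\omega$ in it has the form $\omega=\begin{pmatrix}\omega_0&0\\0&\omega_1\end{pmatrix}$ with $\omega_0,\omega_1$ complex numbers of modulus one (times the identity on the respective summand). *)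

theory Defs
  imports "HOL-Analysis.Analysis"
begin

text \<open>A complex Hilbert space is modelled as a real Hilbert space (type class real_inner
  plus completeness) together with an orthogonal complex structure J (multiplication by i).
  The complex inner product is then x \<bullet> y + i (x \<bullet> J y) (up to convention), and the
  norm is the same.\<close>

definition complex_structure :: "('h::real_inner \<Rightarrow> 'h) \<Rightarrow> bool" where
  "complex_structure J \<longleftrightarrow> bounded_linear J \<and> (\<forall>v. J (J v) = - v) \<and> (\<forall>v w. J v \<bullet> J w = v \<bullet> w)"

definition cscale :: "('h::real_inner \<Rightarrow> 'h) \<Rightarrow> complex \<Rightarrow> 'h \<Rightarrow> 'h" where
  "cscale J c v = Re c *\<^sub>R v + Im c *\<^sub>R J v"

text \<open>Elements of B(H): bounded complex-linear operators.\<close>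
definition bounded_op :: "('h::real_inner \<Rightarrow> 'h) \<Rightarrow> ('h \<Rightarrow> 'h) \<Rightarrow> bool" where
  "bounded_op J f \<longleftrightarrow> bounded_linear f \<and> (\<forall>v. f (J v) = J (f v))"

text \<open>A Z2-grading H = H_even (+) H_odd with grading operator eps = diag(1,-1):
  eps is a bounded complex-linear self-adjoint involution (H_even, H_odd are its
  +1 / -1 eigenspaces, which are orthogonal complementary closed subspaces).\<close>
definition grading_op :: "('h::real_inner \<Rightarrow> 'h) \<Rightarrow> ('h \<Rightarrow> 'h) \<Rightarrow> bool" where
  "grading_op J e \<longleftrightarrow> bounded_op J e \<and> (\<forall>v. e (e v) = v) \<and> adjoint e = e"

text \<open>The C*-algebra C*(1, eps) generated by the identity and eps; since eps is a
  self-adjoint involution it is the (closed, finite-dimensional) span of 1 and eps.\<close>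
definition cstar_one_eps :: "('h::real_inner \<Rightarrow> 'h) \<Rightarrow> ('h \<Rightarrow> 'h) \<Rightarrow> ('h \<Rightarrow> 'h) set" where
  "cstar_one_eps J e = {(\<lambda>v. cscale J a v + cscale J b (e v)) | a b. True}"

definition unitary_op :: "('h::real_inner \<Rightarrow> 'h) \<Rightarrow> ('h \<Rightarrow> 'h) \<Rightarrow> bool" where
  "unitary_op J u \<longleftrightarrow> bounded_op J u \<and> adjoint u \<circ> u = id \<and> u \<circ> adjoint u = id"

definition omega_adj :: "('h::real_inner \<Rightarrow> 'h) \<Rightarrow> ('h \<Rightarrow> 'h) \<Rightarrow> ('h \<Rightarrow> 'h)" where
  "omega_adj w x = w \<circ> adjoint x \<circ> w"

definition omega_hermitian :: "('h::real_inner \<Rightarrow> 'h) \<Rightarrow> ('h \<Rightarrow> 'h) \<Rightarrow> bool" where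
  "omega_hermitian w x \<longleftrightarrow> omega_adj w x = x"

end

theory Submission
  imports Defs
begin

text \<open>Write \<open>W\<close> for the adjoint of the unitary \<open>\<omega>\<close> and \<open>h = W x\<close>. Then \<open>x\<close> is
  \<open>\<omega>\<close>-hermitian iff \<open>h\<close> is self-adjoint, \<open>\<parallel>x\<parallel> = \<parallel>h\<parallel>\<close>, and
  \<open>\<parallel>(x - it\<omega>)v\<parallel> = \<parallel>hv - t Jv\<parallel>\<close>. Expanding the square,
  \<open>\<parallel>hv - t Jv\<parallel>\<^sup>2 = \<parallel>hv\<parallel>\<^sup>2 - 2t (hv \<bullet> Jv) + t\<^sup>2\<parallel>v\<parallel>\<^sup>2\<close>, so the family of bounds in \<open>t\<close>
  says exactly that \<open>\<parallel>hv\<parallel> \<le> \<parallel>v\<parallel>\<close> and \<open>hv \<bullet> Jv = 0\<close> for all \<open>v\<close>; for a complex-linear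
  \<open>h\<close> the latter is, by polarization, self-adjointness. Since the space is infinite-dimensional,
  the existence of adjoints needs the Riesz representation theorem, proved here by minimizing
  \<open>\<parallel>v\<parallel>\<^sup>2/2 - \<phi> v\<close>.\<close>

lemma parallelogram_law_midpoint:
  fixes a b :: "'a::real_inner"
  shows "(norm (a - b))\<^sup>2 = 2 * (norm a)\<^sup>2 + 2 * (norm b)\<^sup>2 - 4 * (norm ((1/2) *\<^sub>R (a + b)))\<^sup>2"
  by (simp add: power2_norm_eq_inner inner_diff inner_add inner_commute algebra_simps)

lemma linear_coeff_zero_if_bounded_above:
  fixes c d :: real
  assumes "\<And>t. t * c \<le> d"
  shows "c = 0"
proof (rule ccontr)
  assume "c \<noteq> 0"
  then have "(\<bar>d\<bar> + 1) / c * c = \<bar>d\<bar> + 1" by simp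
  with assms[of "(\<bar>d\<bar> + 1) / c"] show False by linarith
qed

lemma linear_coeff_zero_if_quadratic_nonneg:
  fixes a c :: real
  assumes "\<And>t. 0 \<le> t * c + t\<^sup>2 * a"
  shows "c = 0"
proof (rule ccontr)
  assume "c \<noteq> 0"
  define D where "D = 2 * (\<bar>a\<bar> + 1)"
  have D: "D > 0" "a < D" by (auto simp: D_def)
  have "(- c / D) * c + (- c / D)\<^sup>2 * a = c\<^sup>2 * (a - D) / D\<^sup>2"
    using D by (simp add: field_simps power2_eq_square)
  also have "\<dots> < 0"
    using D \<open>c \<noteq> 0\<close> by (intro divide_neg_pos mult_pos_neg) simp_all
  finally show False using assms[of "- c / D"] by simp
qed

lemma energy_minimizing_sequence_Cauchy:
  fixes \<phi> :: "'a::real_inner \<Rightarrow> real" and s :: "nat \<Rightarrow> 'a"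
  defines "F \<equiv> \<lambda>v. (norm v)\<^sup>2 / 2 - \<phi> v"
  assumes "linear \<phi>"
    and lower: "\<And>y. m \<le> F y"
    and s: "\<And>n. F (s n) < m + inverse (real (Suc n))"
  shows "Cauchy s"
proof (rule CauchyI)
  interpret linear \<phi> by fact
  have midpoint: "(norm (a - b))\<^sup>2 \<le> 4 * (F a + F b - 2 * m)" for a b
  proof -
    have "(norm (a - b))\<^sup>2 = 4 * (F a + F b - 2 * F ((1/2) *\<^sub>R (a + b)))"
      unfolding F_def parallelogram_law_midpoint by (simp add: scale add algebra_simps)
    with lower[of "(1/2) *\<^sub>R (a + b)"] show ?thesis by simp
  qed
  fix e :: real assume "0 < e"
  obtain N :: nat where N: "8 / e\<^sup>2 < real N" using reals_Archimedean2 by blast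
  have "norm (s a - s b) < e" if "N \<le> a" "N \<le> b" for a b
  proof -
    have "inverse (real (Suc a)) \<le> inverse (real (Suc N))" "inverse (real (Suc b)) \<le> inverse (real (Suc N))"
      using that by (simp_all add: field_simps)
    then have "(norm (s a - s b))\<^sup>2 < 8 * inverse (real (Suc N))"
      using midpoint[of "s a" "s b"] s[of a] s[of b] by (smt (verit))
    also have "\<dots> < e\<^sup>2"
    proof -
      have "8 / e\<^sup>2 < real (Suc N)" using N by simp
      then have "8 < e\<^sup>2 * real (Suc N)" using \<open>0 < e\<close> by (simp add: field_simps)
      then show ?thesis by (simp add: field_simps)
    qed
    finally show ?thesis using \<open>0 < e\<close> by (simp add: power_less_imp_less_base)
  qed
  then show "\<exists>M. \<forall>a\<ge>M. \<forall>b\<ge>M. norm (s a - s b) < e" by blast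
qed

lemma energy_minimizer_exists:
  fixes \<phi> :: "'a::{real_inner,complete_space} \<Rightarrow> real"
  assumes "bounded_linear \<phi>"
  shows "\<exists>z. \<forall>y. (norm z)\<^sup>2 / 2 - \<phi> z \<le> (norm y)\<^sup>2 / 2 - \<phi> y"
proof -
  interpret bounded_linear \<phi> by fact
  define F where "F v = (norm v)\<^sup>2 / 2 - \<phi> v" for v
  obtain C where C: "\<And>v. norm (\<phi> v) \<le> norm v * C" using bounded by blast
  have "- (C\<^sup>2 / 2) \<le> F v" for v
  proof -
    have "\<phi> v \<le> norm v * C" using C[of v] by simp
    moreover have "0 \<le> (norm v - C)\<^sup>2" by simp
    ultimately show ?thesis unfolding F_def by (simp add: power2_eq_square algebra_simps)
  qed
  then have bdd: "bdd_below (range F)" by (intro bdd_belowI[where m = "- (C\<^sup>2 / 2)"]) auto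
  define m where "m = Inf (range F)"
  have lower: "m \<le> F y" for y unfolding m_def using bdd by (simp add: cInf_lower)
  have "\<exists>v. F v < m + inverse (real (Suc n))" for n
    using cInf_lessD[of "range F" "m + inverse (real (Suc n))"] unfolding m_def by auto
  then obtain s where s: "\<And>n. F (s n) < m + inverse (real (Suc n))" by metis
  have "Cauchy s"
    using lower s unfolding F_def by (rule energy_minimizing_sequence_Cauchy[OF linear])
  then obtain z where z: "s \<longlonglongrightarrow> z" using Cauchy_convergent convergent_def by blast
  have "(\<lambda>n. F (s n)) \<longlonglongrightarrow> F z" unfolding F_def
    by (intro tendsto_intros z tendsto) auto
  moreover have "(\<lambda>n. F (s n)) \<longlonglongrightarrow> m"
  proof (rule real_tendsto_sandwich[where f = "\<lambda>n. m" and h = "\<lambda>n. m + inverse (real (Suc n))"])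
    show "\<forall>\<^sub>F n in sequentially. F (s n) \<le> m + inverse (real (Suc n))"
      using s by (simp add: less_imp_le)
  qed (use lower in \<open>auto simp del: of_nat_Suc intro: LIMSEQ_inverse_real_of_nat_add\<close>)
  ultimately have "F z = m" by (rule LIMSEQ_unique)
  then show ?thesis using lower unfolding F_def by metis
qed

lemma bounded_linear_inner_representation:
  fixes \<phi> :: "'a::{real_inner,complete_space} \<Rightarrow> real"
  assumes "bounded_linear \<phi>"
  shows "\<exists>z. \<forall>v. \<phi> v = v \<bullet> z"
proof -
  interpret bounded_linear \<phi> by fact
  obtain z where z: "\<And>y. (norm z)\<^sup>2 / 2 - \<phi> z \<le> (norm y)\<^sup>2 / 2 - \<phi> y"
    using energy_minimizer_exists[OF assms] by blast
  have "\<phi> v = v \<bullet> z" for v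
  proof -
    have "0 \<le> t * (z \<bullet> v - \<phi> v) + t\<^sup>2 * ((norm v)\<^sup>2 / 2)" for t
    proof -
      have "(norm (z + t *\<^sub>R v))\<^sup>2 = (norm z)\<^sup>2 + 2 * t * (z \<bullet> v) + t\<^sup>2 * (norm v)\<^sup>2"
        by (simp only: power2_norm_eq_inner)
          (simp add: inner_add inner_commute algebra_simps power2_eq_square)
      with z[of "z + t *\<^sub>R v"] show ?thesis by (simp add: add scale algebra_simps)
    qed
    then have "z \<bullet> v - \<phi> v = 0" by (rule linear_coeff_zero_if_quadratic_nonneg)
    then show ?thesis by (simp add: inner_commute)
  qed
  then show ?thesis by blast
qed

lemma hilbert_adjoint_works:
  fixes f :: "'a::{real_inner,complete_space} \<Rightarrow> 'b::real_inner"
  assumes "bounded_linear f"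
  shows "f x \<bullet> y = x \<bullet> adjoint f y"
proof -
  have "\<exists>z. \<forall>x. f x \<bullet> y = x \<bullet> z" for y
    by (rule bounded_linear_inner_representation)
      (rule bounded_linear_compose[OF bounded_linear_inner_left assms])
  then obtain g where g: "\<And>x y. f x \<bullet> y = x \<bullet> g y" by metis
  then have "adjoint f = g" by (intro adjoint_unique) blast
  with g show ?thesis by simp
qed

lemma hilbert_adjoint_linear:
  fixes f :: "'a::{real_inner,complete_space} \<Rightarrow> 'b::real_inner"
  assumes "bounded_linear f"
  shows "linear (adjoint f)"
  by (rule linearI; rule vector_eq_ldot[THEN iffD1]; intro allI)
    (simp_all add: hilbert_adjoint_works[OF assms, symmetric] inner_add_right)

lemma onorm_le_iff:
  assumes "bounded_linear f" "0 \<le> b"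
  shows "onorm f \<le> b \<longleftrightarrow> (\<forall>v. norm (f v) \<le> b * norm v)"
  using onorm[OF assms(1)] onorm_bound[OF assms(2)]
  by (meson mult_right_mono norm_ge_zero order_trans)

lemma norm_le_sqrt_mult_iff:
  fixes a v :: "'a::real_normed_vector"
  shows "norm a \<le> sqrt r * norm v \<longleftrightarrow> (norm a)\<^sup>2 \<le> r * (norm v)\<^sup>2"
proof -
  have "sqrt r * norm v = sqrt (r * (norm v)\<^sup>2)" by (simp add: real_sqrt_mult)
  moreover have "norm a = sqrt ((norm a)\<^sup>2)" by simp
  ultimately show ?thesis by (metis real_sqrt_le_iff)
qed

lemma norm_diff_scaleR_le_sqrt_iff:
  fixes a b v :: "'a::real_inner"
  assumes "norm b = norm v"
  shows "(\<forall>t::real. norm (a - t *\<^sub>R b) \<le> sqrt (1 + t\<^sup>2) * norm v) \<longleftrightarrow>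
    a \<bullet> b = 0 \<and> norm a \<le> norm v"
proof -
  have "b \<bullet> b = v \<bullet> v" using assms by (metis power2_norm_eq_inner)
  then have expand: "(norm (a - t *\<^sub>R b))\<^sup>2 = (norm a)\<^sup>2 - 2 * t * (a \<bullet> b) + t\<^sup>2 * (norm v)\<^sup>2" for t
    by (simp only: power2_norm_eq_inner)
      (simp add: inner_diff inner_commute algebra_simps power2_eq_square)
  have "norm (a - t *\<^sub>R b) \<le> sqrt (1 + t\<^sup>2) * norm v \<longleftrightarrow>
      t * (- 2 * (a \<bullet> b)) \<le> (norm v)\<^sup>2 - (norm a)\<^sup>2" for t
    by (simp only: norm_le_sqrt_mult_iff expand) (simp add: algebra_simps)
  moreover have "(\<forall>t. t * (- 2 * (a \<bullet> b)) \<le> (norm v)\<^sup>2 - (norm a)\<^sup>2) \<longleftrightarrow>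
      a \<bullet> b = 0 \<and> norm a \<le> norm v"
    using linear_coeff_zero_if_bounded_above[of "- 2 * (a \<bullet> b)" "(norm v)\<^sup>2 - (norm a)\<^sup>2"]
    by (auto simp: power_mono_iff)
  ultimately show ?thesis by simp
qed

lemma complex_structure_skew:
  assumes "complex_structure J"
  shows "J a \<bullet> b = - (a \<bullet> J b)"
proof -
  have JJ: "J (J v) = - v" and orth: "J u \<bullet> J v = u \<bullet> v" for u v
    using assms by (simp_all add: complex_structure_def)
  have "J a \<bullet> b = J (J a) \<bullet> J b" by (simp only: orth)
  then show ?thesis by (simp add: JJ)
qed

lemma self_adjoint_iff_inner_complex_structure_zero:
  assumes J: "complex_structure J" and "linear h" and hJ: "\<And>v. h (J v) = J (h v)"
  shows "(\<forall>u v. h u \<bullet> v = u \<bullet> h v) \<longleftrightarrow> (\<forall>v. h v \<bullet> J v = 0)"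
proof
  assume sym: "\<forall>u v. h u \<bullet> v = u \<bullet> h v"
  show "\<forall>v. h v \<bullet> J v = 0"
  proof
    fix v
    have "h v \<bullet> J v = J (h v) \<bullet> v" using sym by (simp add: hJ inner_commute)
    also have "\<dots> = - (h v \<bullet> J v)" by (rule complex_structure_skew[OF J])
    finally show "h v \<bullet> J v = 0" by simp
  qed
next
  assume zero: "\<forall>v. h v \<bullet> J v = 0"
  interpret h: linear h by fact
  interpret J: bounded_linear J using J by (simp add: complex_structure_def)
  \<comment> \<open>polarize the quadratic form \<open>v \<mapsto> h v \<bullet> J v\<close>, then replace \<open>v\<close> by \<open>J v\<close>\<close>
  have polar: "h u \<bullet> J v + h v \<bullet> J u = 0" for u v
    using zero[rule_format, of "u + v"] zero[rule_format, of u] zero[rule_format, of v]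
    by (simp add: h.add J.add inner_add)
  show "\<forall>u v. h u \<bullet> v = u \<bullet> h v"
  proof (intro allI)
    fix u v
    have "- (h u \<bullet> v) + J (h v) \<bullet> J u = 0"
      using polar[of u "J v"] J by (simp add: complex_structure_def hJ)
    then show "h u \<bullet> v = u \<bullet> h v" using J by (simp add: complex_structure_def inner_commute)
  qed
qed

lemma self_adjoint_contraction_iff:
  assumes J: "complex_structure J" and "linear h" and "\<And>v. h (J v) = J (h v)"
  shows "((\<forall>u v. h u \<bullet> v = u \<bullet> h v) \<and> (\<forall>v. norm (h v) \<le> norm v)) \<longleftrightarrow>
    (\<forall>t v. norm (h v - t *\<^sub>R J v) \<le> sqrt (1 + t\<^sup>2) * norm v)"
proof -
  have "norm (J v) = norm v" for v
    using J by (simp add: complex_structure_def norm_eq_sqrt_inner)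
  then have "(\<forall>t. norm (h v - t *\<^sub>R J v) \<le> sqrt (1 + t\<^sup>2) * norm v) \<longleftrightarrow>
      h v \<bullet> J v = 0 \<and> norm (h v) \<le> norm v" for v
    by (rule norm_diff_scaleR_le_sqrt_iff)
  then show ?thesis
    using self_adjoint_iff_inner_complex_structure_zero[OF assms] by blast
qed

lemma norm_adjoint_left_inverse:
  fixes w :: "'a::{real_inner,complete_space} \<Rightarrow> 'b::real_inner"
  assumes "bounded_linear w" and "adjoint w \<circ> w = id"
  shows "norm (w v) = norm v"
proof -
  have "w v \<bullet> w v = v \<bullet> v"
    using assms by (simp add: hilbert_adjoint_works pointfree_idE)
  then show ?thesis by (simp add: norm_eq_sqrt_inner)
qed

lemma omega_hermitian_iff_self_adjoint:
  fixes w x :: "'a::{real_inner,complete_space} \<Rightarrow> 'a"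
  assumes w: "bounded_linear w" "adjoint w \<circ> w = id" "w \<circ> adjoint w = id"
    and x: "bounded_linear x"
  shows "omega_hermitian w x \<longleftrightarrow> (\<forall>u v. adjoint w (x u) \<bullet> v = u \<bullet> adjoint w (x v))"
proof -
  have "adjoint w (x u) \<bullet> v = u \<bullet> adjoint x (w v)" for u v
    by (metis hilbert_adjoint_works inner_commute w(1) x)
  then have "(\<forall>u v. adjoint w (x u) \<bullet> v = u \<bullet> adjoint w (x v)) \<longleftrightarrow>
      (\<forall>v. adjoint x (w v) = adjoint w (x v))"
    by (metis vector_eq_ldot)
  also have "\<dots> \<longleftrightarrow> (\<forall>v. w (adjoint x (w v)) = x v)"
    using w(2,3) by (metis comp_apply id_apply)
  also have "\<dots> \<longleftrightarrow> omega_hermitian w x"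
    by (simp add: omega_hermitian_def omega_adj_def fun_eq_iff)
  finally show ?thesis ..
qed

lemma onorm_diff_complex_scaled_unitary_le_iff:
  fixes J w x :: "'a::{real_inner,complete_space} \<Rightarrow> 'a"
  assumes J: "bounded_linear J"
    and w: "bounded_linear w" "adjoint w \<circ> w = id" "w \<circ> adjoint w = id" "\<And>v. w (J v) = J (w v)"
    and x: "bounded_linear x"
  shows "onorm (\<lambda>v. x v - cscale J (\<i> * complex_of_real t) (w v)) \<le> sqrt (1 + t\<^sup>2) \<longleftrightarrow>
    (\<forall>v. norm (adjoint w (x v) - t *\<^sub>R J v) \<le> sqrt (1 + t\<^sup>2) * norm v)"
proof -
  interpret w: bounded_linear w by (rule w(1))
  have "x v - cscale J (\<i> * complex_of_real t) (w v) = w (adjoint w (x v) - t *\<^sub>R J v)" for v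
    using w(3) by (simp add: cscale_def w(4) w.diff w.scale pointfree_idE)
  then have norms: "norm (x v - cscale J (\<i> * complex_of_real t) (w v)) =
      norm (adjoint w (x v) - t *\<^sub>R J v)" for v
    by (simp add: norm_adjoint_left_inverse[OF w(1,2)])
  have bounded: "bounded_linear (\<lambda>v. x v - cscale J (\<i> * complex_of_real t) (w v))"
    unfolding cscale_def by (simp add: x w(1) J bounded_linear_compose[OF J w(1)] bounded_linear_sub
        bounded_linear_compose[OF bounded_linear_scaleR_right])
  show ?thesis
    using onorm_le_iff[OF bounded, of "sqrt (1 + t\<^sup>2)"] by (simp add: norms)
qed

theorem lemma2:
  fixes J e w x :: "'h::{real_inner, complete_space} \<Rightarrow> 'h"
  assumes "complex_structure J"
    and "grading_op J e"
    and "w \<in> cstar_one_eps J e"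
    and "unitary_op J w"
    and "bounded_op J x"
  shows "(omega_hermitian w x \<and> onorm x \<le> 1) \<longleftrightarrow>
    (\<forall>t::real. onorm (\<lambda>v. x v - cscale J (\<i> * complex_of_real t) (w v)) \<le> sqrt (1 + t\<^sup>2))"
proof -
  have J: "bounded_linear J" using assms(1) by (simp add: complex_structure_def)
  have w: "bounded_linear w" "adjoint w \<circ> w = id" "w \<circ> adjoint w = id" "\<And>v. w (J v) = J (w v)"
    and x: "bounded_linear x" "\<And>v. x (J v) = J (x v)"
    using assms(4,5) by (auto simp: unitary_op_def bounded_op_def)
  define h where "h v = adjoint w (x v)" for v
  have x_eq: "x v = w (h v)" for v using w(3) by (simp add: h_def pointfree_idE)
  have "linear h"
    using linear_compose[OF bounded_linear.linear[OF x(1)] hilbert_adjoint_linear[OF w(1)]]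
    unfolding h_def[abs_def] by (simp add: o_def)
  moreover have "h (J v) = J (h v)" for v
    using w(2,4) x_eq x(2) by (metis comp_apply h_def id_apply)
  ultimately have "((\<forall>u v. h u \<bullet> v = u \<bullet> h v) \<and> (\<forall>v. norm (h v) \<le> norm v)) \<longleftrightarrow>
      (\<forall>t v. norm (h v - t *\<^sub>R J v) \<le> sqrt (1 + t\<^sup>2) * norm v)"
    by (rule self_adjoint_contraction_iff[OF assms(1)])
  moreover have "onorm x \<le> 1 \<longleftrightarrow> (\<forall>v. norm (h v) \<le> norm v)"
    using norm_adjoint_left_inverse[OF w(1,2)] by (simp add: onorm_le_iff[OF x(1)] x_eq)
  ultimately show ?thesis
    using omega_hermitian_iff_self_adjoint[OF w(1-3) x(1)]
      onorm_diff_complex_scaled_unitary_le_iff[OF J w x(1)]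
    unfolding h_def by auto
qed

end
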